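(* Let $\mathcal{A}$ be a BST mergesort algorithm which sorts the permutation $\pi$ of $\{1,\dots,n\}$ using $\mathcal{A}(\pi)$ accesses. Then $\mathrm{OPT}_{\mathrm{BST}}(\pi)\in O(\mathcal{A}(\pi))$.
   Context: BST model: the keys $\{1,\dots,n\}$ are stored in a BST; an access sequence is served in order, each search starting with a pointer at the root and at each step moving the pointer to the parent or a child, or rotating the current node with its parent, each at unit cost; the search must visit its key. $\mathrm{OPT}_{\mathrm{BST}}(\pi)$ is the minimum cost of an offline BST algorithm (knowing the whole sequence in advance) serving $\pi$ as an access sequence. A top tree of a binary tree $T$ is a connected set of nodes containing the root. BST merge: given BSTs $T_A,T_B$ with disjoint keys, for some top trees $\tau_a$ of $T_A$, $\tau_b$ of $T_B$, it returns a BST $T$ on the union of keys such that for some top tree $\tau$ of $T$, $\tau=\tau_a\cup\tau_b$, the subtrees of $T$ hanging off $\tau$ are unchanged subtrees of $T_A$ or $T_B$, and $\tau$ contains the block boundaries (in the sorted merged order, a block is a maximal contiguous run of keys from the same input; its boundaries are its first and last keys). Number of accesses: $|\tau|$. BST mergesort: on input of size 1 returns it; otherwise splits the input sequence into two contiguous parts each of size at least 1, recursively BST-mergesorts each, and BST-merges the results. Number of accesses: the sum of accesses over all merges. *)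

theory Defs
  imports Main "HOL-Library.Tree"
begin

datatype dir = DL | DR

text \<open>A pointer position in a tree is a path from the root.\<close>
fun subtree_at :: "'a tree \<Rightarrow> dir list \<Rightarrow> 'a tree" where
  "subtree_at t [] = t"
| "subtree_at Leaf (d # p) = Leaf"
| "subtree_at (Node l x r) (DL # p) = subtree_at l p"
| "subtree_at (Node l x r) (DR # p) = subtree_at r p"

definition value_at :: "'a tree \<Rightarrow> dir list \<Rightarrow> 'a option" where
  "value_at t p = (case subtree_at t p of Leaf \<Rightarrow> None | Node _ x _ \<Rightarrow> Some x)"

fun mod_at :: "dir list \<Rightarrow> ('a tree \<Rightarrow> 'a tree) \<Rightarrow> 'a tree \<Rightarrow> 'a tree" where
  "mod_at [] f t = f t"
| "mod_at (d # p) f Leaf = Leaf"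
| "mod_at (DL # p) f (Node l x r) = Node (mod_at p f l) x r"
| "mod_at (DR # p) f (Node l x r) = Node l x (mod_at p f r)"

fun rot_up :: "dir \<Rightarrow> 'a tree \<Rightarrow> 'a tree" where
  "rot_up DL (Node (Node a x b) y c) = Node a x (Node b y c)"
| "rot_up DR (Node a y (Node b x c)) = Node (Node a y b) x c"
| "rot_up d t = t"

text \<open>One unit-cost step: move to parent, move to a child, or rotate the
  current node with its parent (the pointer stays on the rotated node).\<close>
definition bst_step :: "(('a tree \<times> dir list) \<times> ('a tree \<times> dir list)) set" where
  "bst_step = {((t, p), (t', p')). subtree_at t p \<noteq> Leaf \<and>
     ((p \<noteq> [] \<and> t' = t \<and> p' = butlast p)
    \<or> (\<exists>d. t' = t \<and> p' = p @ [d] \<and> subtree_at t (p @ [d]) \<noteq> Leaf)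
    \<or> (\<exists>q d. p = q @ [d] \<and> p' = q \<and> t' = mod_at q (rot_up d) t))}"

definition search :: "'a tree \<Rightarrow> 'a \<Rightarrow> 'a tree \<Rightarrow> nat \<Rightarrow> bool" where
  "search t k t' m \<longleftrightarrow> (\<exists>c q m1 m2. ((t, []), c) \<in> bst_step ^^ m1 \<and>
      value_at (fst c) (snd c) = Some k \<and> (c, (t', q)) \<in> bst_step ^^ m2 \<and> m = m1 + m2)"

fun serve :: "'a tree \<Rightarrow> 'a list \<Rightarrow> nat \<Rightarrow> bool" where
  "serve t [] m \<longleftrightarrow> m = 0"
| "serve t (k # ks) m \<longleftrightarrow> (\<exists>t' m1 m2. search t k t' m1 \<and> serve t' ks m2 \<and> m = m1 + m2)"

text \<open>Offline optimum: the initial BST on the keys is chosen freely as well.\<close>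
definition opt_bst :: "nat list \<Rightarrow> nat" where
  "opt_bst \<pi> = (LEAST m. \<exists>t. bst t \<and> set_tree t = set \<pi> \<and> serve t \<pi> m)"

text \<open>S (a set of keys = nodes) is a top tree of T: connected, containing the root.\<close>
fun top_tree :: "'a tree \<Rightarrow> 'a set \<Rightarrow> bool" where
  "top_tree Leaf S = False"
| "top_tree (Node l x r) S \<longleftrightarrow> x \<in> S \<and> S \<subseteq> set_tree (Node l x r)
     \<and> (S \<inter> set_tree l = {} \<or> top_tree l (S \<inter> set_tree l))
     \<and> (S \<inter> set_tree r = {} \<or> top_tree r (S \<inter> set_tree r))"

fun hanging :: "'a set \<Rightarrow> 'a tree \<Rightarrow> 'a tree set" where
  "hanging S Leaf = {}"
| "hanging S (Node l x r) =
     (if x \<in> S then hanging S l \<union> hanging S r else {Node l x r})"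

text \<open>Block boundaries of the merged order of A and B.\<close>
definition block_first :: "'a::linorder set \<Rightarrow> 'a set \<Rightarrow> 'a \<Rightarrow> bool" where
  "block_first A B x \<longleftrightarrow>
     (x \<in> A \<and> \<not> (\<exists>y\<in>A. y < x \<and> {y<..<x} \<inter> B = {}))
   \<or> (x \<in> B \<and> \<not> (\<exists>y\<in>B. y < x \<and> {y<..<x} \<inter> A = {}))"

definition block_last :: "'a::linorder set \<Rightarrow> 'a set \<Rightarrow> 'a \<Rightarrow> bool" where
  "block_last A B x \<longleftrightarrow>
     (x \<in> A \<and> \<not> (\<exists>y\<in>A. x < y \<and> {x<..<y} \<inter> B = {}))
   \<or> (x \<in> B \<and> \<not> (\<exists>y\<in>B. x < y \<and> {x<..<y} \<inter> A = {}))"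

definition block_boundaries :: "'a::linorder set \<Rightarrow> 'a set \<Rightarrow> 'a set" where
  "block_boundaries A B = {x. block_first A B x \<or> block_last A B x}"

definition bst_merge :: "'a::linorder tree \<Rightarrow> 'a tree \<Rightarrow> 'a tree \<Rightarrow> nat \<Rightarrow> bool" where
  "bst_merge TA TB T m \<longleftrightarrow>
     bst TA \<and> bst TB \<and> set_tree TA \<inter> set_tree TB = {} \<and>
     (\<exists>\<tau>a \<tau>b. top_tree TA \<tau>a \<and> top_tree TB \<tau>b \<and>
        bst T \<and> set_tree T = set_tree TA \<union> set_tree TB \<and>
        top_tree T (\<tau>a \<union> \<tau>b) \<and>
        (\<forall>s \<in> hanging (\<tau>a \<union> \<tau>b) T. s \<in> subtrees TA \<or> s \<in> subtrees TB) \<and>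
        block_boundaries (set_tree TA) (set_tree TB) \<subseteq> \<tau>a \<union> \<tau>b \<and>
        m = card (\<tau>a \<union> \<tau>b))"

inductive msort :: "'a::linorder list \<Rightarrow> 'a tree \<Rightarrow> nat \<Rightarrow> bool" where
  single: "msort [x] (Node Leaf x Leaf) 0"
| merge: "\<lbrakk> xs \<noteq> []; ys \<noteq> []; msort xs TA a; msort ys TB b; bst_merge TA TB T m \<rbrakk>
          \<Longrightarrow> msort (xs @ ys) T (a + b + m)"

end

theory Submission
  imports Defs
begin

text \<open>
  The input is served starting from the output tree of the mergesort run, by induction over
  the run: if the run on xs outputs T using a accesses, then from any BST U having T as a
  prefix (U arises from T by attaching subtrees at leaves) the keys of xs can be accessed
  in order, ending again in U, with at most 48 a moves.

  For a merge of TA and TB with top part \<tau>, write the in-order sequence of the keys of \<tau>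
  and of the subtrees hanging off \<tau> as an item list. Since every block boundary lies in
  \<tau>, a subtree of TA hanging off \<tau> spans no key of TB; hence the item list of U can be
  grafted below the top of TA, giving a BST VA with prefix TA and the same item list,
  and likewise VB. Two BSTs with the same item list are at most 16 |\<tau>| moves apart:
  rotate both into a right spine (2 moves per top node) and undo one of the two, each move
  being undone by at most 3 moves. Going from U to VA, serving the left half, going to VB, serving
  the right half and returning to U thus costs 48 |\<tau>| plus the recursive costs.
\<close>

section \<open>Moves\<close>

lemma subtree_at_Leaf [simp]: "subtree_at Leaf p = Leaf"
  by (cases p) auto

lemma subtree_at_append: "subtree_at t (p @ q) = subtree_at (subtree_at t p) q"
  by (induction t p rule: subtree_at.induct) auto

lemma subtree_at_append_not_Leaf: "subtree_at t (p @ q) \<noteq> Leaf \<Longrightarrow> subtree_at t p \<noteq> Leaf"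
  by (metis subtree_at_Leaf subtree_at_append)

lemma subtree_at_mod_at:
  "subtree_at t p \<noteq> Leaf \<Longrightarrow> subtree_at (mod_at p f t) (p @ q) = subtree_at (f (subtree_at t p)) q"
  by (induction p f t rule: mod_at.induct) auto

lemma mod_at_comp: "mod_at p f (mod_at p g t) = mod_at p (f \<circ> g) t"
  by (induction p g t rule: mod_at.induct) auto

lemma mod_at_id: "f (subtree_at t p) = subtree_at t p \<Longrightarrow> mod_at p f t = t"
  by (induction p f t rule: mod_at.induct) auto

lemma bst_step_iff: "((t, p), (t', p')) \<in> bst_step \<longleftrightarrow> subtree_at t p \<noteq> Leaf \<and>
     ((p \<noteq> [] \<and> t' = t \<and> p' = butlast p)
    \<or> (\<exists>d. t' = t \<and> p' = p @ [d] \<and> subtree_at t (p @ [d]) \<noteq> Leaf)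
    \<or> (\<exists>q d. p = q @ [d] \<and> p' = q \<and> t' = mod_at q (rot_up d) t))"
  unfolding bst_step_def by simp

fun flip :: "dir \<Rightarrow> dir" where
  "flip DL = DR"
| "flip DR = DL"

lemma rot_up_flip_rot_up:
  "subtree_at s [d] \<noteq> Leaf \<Longrightarrow> rot_up (flip d) (rot_up d s) = s"
  by (cases "(d, s)" rule: rot_up.cases) auto

lemma subtree_at_rot_up_flip:
  "subtree_at s [d] \<noteq> Leaf \<Longrightarrow> subtree_at (rot_up d s) [flip d] \<noteq> Leaf"
  by (cases d; cases s) (auto simp: neq_Leaf_iff)

lemma rot_up_not_Leaf: "subtree_at s [d] \<noteq> Leaf \<Longrightarrow> rot_up d s \<noteq> Leaf"
  by (cases "(d, s)" rule: rot_up.cases) auto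

text \<open>A rotation is undone by descending to the former parent, rotating it back up and
  descending again.\<close>
lemma rotation_reverse:
  assumes "subtree_at t (q @ [d]) \<noteq> Leaf"
  shows "((mod_at q (rot_up d) t, q), (t, q @ [d])) \<in> bst_step ^^ 3"
proof -
  define t' where "t' = mod_at q (rot_up d) t"
  have q: "subtree_at t q \<noteq> Leaf" and d: "subtree_at (subtree_at t q) [d] \<noteq> Leaf"
    using assms subtree_at_append_not_Leaf subtree_at_append by metis+
  have t'_at: "subtree_at t' (q @ r) = subtree_at (rot_up d (subtree_at t q)) r" for r
    unfolding t'_def using subtree_at_mod_at[OF q] .
  have undo: "mod_at q (rot_up (flip d)) t' = t"
    unfolding t'_def mod_at_comp using rot_up_flip_rot_up[OF d] by (simp add: mod_at_id)
  have "((t', q), (t', q @ [flip d])) \<in> bst_step"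
    using t'_at[of "[]"] t'_at[of "[flip d]"] rot_up_not_Leaf[OF d] subtree_at_rot_up_flip[OF d]
    by (simp add: bst_step_iff)
  moreover have "((t', q @ [flip d]), (t, q)) \<in> bst_step"
    using t'_at[of "[flip d]"] subtree_at_rot_up_flip[OF d] undo by (auto simp: bst_step_iff)
  moreover have "((t, q), (t, q @ [d])) \<in> bst_step"
    using q assms by (auto simp: bst_step_iff)
  ultimately show ?thesis
    unfolding t'_def numeral_3_eq_3 by (blast intro: relpow_Suc_I2 relpow_0_I)
qed

lemma bst_step_reverse:
  assumes "(c, c') \<in> bst_step"
  shows "\<exists>i\<le>3. (c', c) \<in> bst_step ^^ i"
proof -
  obtain t p t' p' where c: "c = (t, p)" "c' = (t', p')" by (cases c, cases c')
  consider "p \<noteq> []" "t' = t" "p' = butlast p"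
    | d where "t' = t" "p' = p @ [d]" "subtree_at t (p @ [d]) \<noteq> Leaf"
    | q d where "p = q @ [d]" "p' = q" "t' = mod_at q (rot_up d) t"
    using assms unfolding c bst_step_iff by blast
  then show ?thesis
  proof cases
    case 1
    then have p: "p = p' @ [last p]" by simp
    have "subtree_at t p \<noteq> Leaf" using assms unfolding c bst_step_iff by blast
    then have "subtree_at t p' \<noteq> Leaf" using p subtree_at_append_not_Leaf by metis
    then have "(c', c) \<in> bst_step"
      using 1 p \<open>subtree_at t p \<noteq> Leaf\<close> unfolding c bst_step_iff by metis
    then show ?thesis by (intro exI[of _ 1]) auto
  next
    case 2
    then have "(c', c) \<in> bst_step" unfolding c bst_step_iff by simp
    then show ?thesis by (intro exI[of _ 1]) auto
  next
    case 3
    then have "subtree_at t (q @ [d]) \<noteq> Leaf" using assms unfolding c bst_step_iff by blast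
    then show ?thesis using rotation_reverse 3 unfolding c by blast
  qed
qed

lemma bst_steps_reverse: "(c, c') \<in> bst_step ^^ j \<Longrightarrow> \<exists>i\<le>3*j. (c', c) \<in> bst_step ^^ i"
proof (induction j arbitrary: c')
  case (Suc j)
  then obtain c'' where "(c, c'') \<in> bst_step ^^ j" and "(c'', c') \<in> bst_step" by auto
  with Suc.IH bst_step_reverse obtain i1 i2 where
    "i1 \<le> 3*j" "(c'', c) \<in> bst_step ^^ i1" "i2 \<le> 3" "(c', c'') \<in> bst_step ^^ i2"
    by blast
  then show ?case using relpow_trans by (intro exI[of _ "i2 + i1"]) fastforce
qed auto

lemma bst_step_lift_right:
  "((r, p), (r', p')) \<in> bst_step \<Longrightarrow> ((Node l x r, DR # p), (Node l x r', DR # p')) \<in> bst_step"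
  unfolding bst_step_iff by (elim conjE disjE exE) (auto simp: butlast.simps)

lemma bst_steps_lift_right:
  "((r, p), (r', p')) \<in> bst_step ^^ j \<Longrightarrow> ((Node l x r, DR # p), (Node l x r', DR # p')) \<in> bst_step ^^ j"
proof (induction j arbitrary: r' p')
  case (Suc j)
  then obtain r'' p'' where "((r, p), (r'', p'')) \<in> bst_step ^^ j" "((r'', p''), (r', p')) \<in> bst_step"
    by auto
  then show ?case using Suc.IH bst_step_lift_right by (meson relpow_Suc_I)
qed auto

section \<open>Item lists of a top part\<close>

text \<open>An item is either a subtree hanging off the top part (possibly a leaf) or a key of
  the top part.\<close>
type_synonym 'a item = "'a tree + 'a"

fun top_inorder :: "'a set \<Rightarrow> 'a tree \<Rightarrow> 'a item list" where
  "top_inorder S Leaf = [Inl Leaf]"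
| "top_inorder S (Node l x r) =
     (if x \<in> S then top_inorder S l @ Inr x # top_inorder S r else [Inl (Node l x r)])"

fun alternating :: "'a item list \<Rightarrow> bool" where
  "alternating [Inl h] = True"
| "alternating (Inl h # Inr x # rest) = alternating rest"
| "alternating _ = False"

fun right_spine :: "'a item list \<Rightarrow> 'a tree" where
  "right_spine [Inl h] = h"
| "right_spine (Inl h # Inr x # rest) = Node h x (right_spine rest)"
| "right_spine _ = Leaf"

definition root_notin :: "'a set \<Rightarrow> 'a tree \<Rightarrow> bool" where
  "root_notin S h \<longleftrightarrow> (case h of Leaf \<Rightarrow> True | Node l x r \<Rightarrow> x \<notin> S)"

fun item_keys :: "'a item \<Rightarrow> 'a set" where
  "item_keys (Inl h) = set_tree h"
| "item_keys (Inr x) = {x}"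

definition item_less :: "'a::linorder item \<Rightarrow> 'a item \<Rightarrow> bool" where
  "item_less a b \<longleftrightarrow> (\<forall>u\<in>item_keys a. \<forall>v\<in>item_keys b. u < v)"

lemma alternating_append_Inr:
  "alternating xs \<Longrightarrow> alternating ys \<Longrightarrow> alternating (xs @ Inr x # ys)"
  by (induction xs rule: alternating.induct) auto

lemma alternating_append_InrD:
  "alternating (xs @ Inr x # ys) \<Longrightarrow> alternating xs \<and> alternating ys"
  by (induction xs rule: alternating.induct) auto

lemma alternating_without_Inr: "alternating L \<Longrightarrow> \<forall>y. Inr y \<notin> set L \<Longrightarrow> \<exists>h. L = [Inl h]"
  by (induction L rule: alternating.induct) auto

lemma alternating_top_inorder: "alternating (top_inorder S t)"
  by (induction t) (auto intro: alternating_append_Inr)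

lemma top_inorder_Inr: "Inr y \<in> set (top_inorder S t) \<Longrightarrow> y \<in> S"
  by (induction t) (auto split: if_splits)

lemma top_inorder_Inl_root_notin: "Inl h \<in> set (top_inorder S t) \<Longrightarrow> root_notin S h"
  by (induction t) (auto split: if_splits simp: root_notin_def)

lemma top_inorder_Inl_bst: "Inl h \<in> set (top_inorder S t) \<Longrightarrow> bst t \<Longrightarrow> bst h"
  by (induction t) (auto split: if_splits)

lemma item_keys_top_inorder: "\<Union>(item_keys ` set (top_inorder S t)) = set_tree t"
  by (induction t) auto

lemma item_keys_subset_set_tree: "it \<in> set (top_inorder S t) \<Longrightarrow> item_keys it \<subseteq> set_tree t"
  using item_keys_top_inorder[of S t] by blast

lemma sorted_top_inorder: "bst t \<Longrightarrow> sorted_wrt item_less (top_inorder S t)"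
proof (induction t)
  case (Node l x r)
  have l: "\<forall>it\<in>set (top_inorder S l). \<forall>u\<in>item_keys it. u < x"
    and r: "\<forall>it\<in>set (top_inorder S r). \<forall>u\<in>item_keys it. x < u"
    using Node.prems item_keys_subset_set_tree by fastforce+
  then have "\<forall>a\<in>set (top_inorder S l). \<forall>b\<in>set (top_inorder S r). item_less a b"
    unfolding item_less_def by (meson less_trans)
  with l r Node show ?case by (simp add: sorted_wrt_append item_less_def)
qed simp

lemma bst_if_sorted_top_inorder:
  assumes "sorted_wrt item_less (top_inorder S t)"
    and "\<forall>h. Inl h \<in> set (top_inorder S t) \<longrightarrow> bst h"
  shows "bst t"
  using assms
proof (induction t)
  case (Node l x r)
  show ?case
  proof (cases "x \<in> S")
    case True
    have l: "\<forall>u\<in>set_tree l. \<exists>it\<in>set (top_inorder S l). u \<in> item_keys it"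
      and r: "\<forall>u\<in>set_tree r. \<exists>it\<in>set (top_inorder S r). u \<in> item_keys it"
      using item_keys_top_inorder[of S l] item_keys_top_inorder[of S r] by blast+
    from Node.prems True have sorted: "sorted_wrt item_less (top_inorder S l @ Inr x # top_inorder S r)"
      by simp
    then have "\<forall>u\<in>set_tree l. u < x" "\<forall>u\<in>set_tree r. x < u"
      using l r by (force simp: sorted_wrt_append item_less_def)+
    moreover have "bst l" "bst r" using Node True sorted by (auto simp: sorted_wrt_append)
    ultimately show ?thesis by simp
  qed (use Node.prems in simp)
qed simp

lemma Inl_hanging_in_top_inorder: "h \<in> hanging S t \<Longrightarrow> Inl h \<in> set (top_inorder S t)"
  by (induction t) (auto split: if_splits)

lemma Inr_in_top_inorder:
  "top_tree t T \<Longrightarrow> T \<subseteq> S \<Longrightarrow> y \<in> T \<Longrightarrow> Inr y \<in> set (top_inorder S t)"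
proof (induction t arbitrary: T)
  case (Node l x r)
  then have "y = x \<or> y \<in> T \<inter> set_tree l \<or> y \<in> T \<inter> set_tree r" and "x \<in> S" by auto
  with Node show ?case by (auto simp del: Int_iff)
qed simp

lemma top_inorder_if_root_notin: "root_notin S h \<Longrightarrow> top_inorder S h = [Inl h]"
  by (cases h) (auto simp: root_notin_def)

lemma top_inorder_right_spine:
  "alternating L \<Longrightarrow> \<forall>h. Inl h \<in> set L \<longrightarrow> root_notin S h \<Longrightarrow> \<forall>y. Inr y \<in> set L \<longrightarrow> y \<in> S
   \<Longrightarrow> top_inorder S (right_spine L) = L"
  by (induction L rule: alternating.induct) (auto simp: top_inorder_if_root_notin)

lemma right_spine_append_Inr_not_Leaf: "alternating xs \<Longrightarrow> right_spine (xs @ Inr z # ys) \<noteq> Leaf"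
  by (induction xs rule: alternating.induct) auto

section \<open>Rotating the top part into a right spine\<close>

fun top_size :: "'a set \<Rightarrow> 'a tree \<Rightarrow> nat" where
  "top_size S Leaf = 0"
| "top_size S (Node l x r) = (if x \<in> S then 1 + top_size S l + top_size S r else 0)"

fun off_spine_size :: "'a set \<Rightarrow> 'a tree \<Rightarrow> nat" where
  "off_spine_size S Leaf = 0"
| "off_spine_size S (Node l x r) = (if x \<in> S then top_size S l + off_spine_size S r else 0)"

lemma off_spine_size_le_top_size: "off_spine_size S t \<le> top_size S t"
  by (induction t) auto

lemma top_size_le_card: "bst t \<Longrightarrow> top_size S t \<le> card (S \<inter> set_tree t)"
proof (induction t)
  case (Node l x r)
  show ?case
  proof (cases "x \<in> S")
    case True
    have "S \<inter> set_tree (Node l x r) = insert x ((S \<inter> set_tree l) \<union> (S \<inter> set_tree r))"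
      using True by auto
    moreover have "(S \<inter> set_tree l) \<inter> (S \<inter> set_tree r) = {}"
      and "x \<notin> (S \<inter> set_tree l) \<union> (S \<inter> set_tree r)"
      using Node.prems by fastforce+
    ultimately have "card (S \<inter> set_tree (Node l x r)) = 1 + card (S \<inter> set_tree l) + card (S \<inter> set_tree r)"
      by (simp add: card_Un_disjoint)
    then show ?thesis using Node True by simp
  qed simp
qed simp

lemma rotate_left_child_to_root:
  "((Node (Node a y b) x c, []), (Node a y (Node b x c), [])) \<in> bst_step ^^ 2"
proof -
  have "((Node (Node a y b) x c, []), (Node (Node a y b) x c, [DL])) \<in> bst_step"
    and "((Node (Node a y b) x c, [DL]), (Node a y (Node b x c), [])) \<in> bst_step"
    by (auto simp: bst_step_iff intro!: exI[of _ "[]"])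
  then show ?thesis by (auto simp: numeral_2_eq_2)
qed

lemma descend_right_and_return:
  assumes "((r, []), (r', [])) \<in> bst_step ^^ j" and "r \<noteq> Leaf" and "r' \<noteq> Leaf"
  shows "((Node l x r, []), (Node l x r', [])) \<in> bst_step ^^ (j + 2)"
proof -
  have "((Node l x r, []), (Node l x r, [DR])) \<in> bst_step"
    and "((Node l x r', [DR]), (Node l x r', [])) \<in> bst_step"
    using assms(2,3) by (auto simp: bst_step_iff)
  then show ?thesis
    using relpow_Suc_I2 relpow_Suc_I bst_steps_lift_right[OF assms(1)] by fastforce
qed

lemma rotate_into_right_spine:
  "\<exists>j\<le>2 * (top_size S t + off_spine_size S t). ((t, []), (right_spine (top_inorder S t), [])) \<in> bst_step ^^ j"
proof (induction "top_size S t + off_spine_size S t" arbitrary: t rule: less_induct)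
  case less
  consider "root_notin S t"
    | l x r where "t = Node l x r" "x \<in> S" "\<not> root_notin S l"
    | l x r where "t = Node l x r" "x \<in> S" "root_notin S l"
    by (cases t) (auto simp: root_notin_def)
  then show ?case
  proof cases
    case 1
    then show ?thesis by (intro exI[of _ 0]) (simp add: top_inorder_if_root_notin)
  next
    case (2 l x r)
    then obtain a y b where l: "l = Node a y b" "y \<in> S" by (cases l) (auto simp: root_notin_def)
    define t' where "t' = Node a y (Node b x r)"
    have "top_inorder S t' = top_inorder S t" and "off_spine_size S t' + 1 = off_spine_size S t"
      and "top_size S t' = top_size S t"
      using 2 l by (auto simp: t'_def)
    moreover obtain j where "j \<le> 2 * (top_size S t' + off_spine_size S t')"
      "((t', []), (right_spine (top_inorder S t'), [])) \<in> bst_step ^^ j"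
      using less[of t'] calculation by fastforce
    ultimately show ?thesis
      using relpow_trans[OF rotate_left_child_to_root] 2 l unfolding t'_def
      by (intro exI[of _ "2 + j"]) auto
  next
    case (3 l x r)
    have t: "right_spine (top_inorder S t) = Node l x (right_spine (top_inorder S r))"
      using 3 by (simp add: top_inorder_if_root_notin)
    show ?thesis
    proof (cases "root_notin S r")
      case True
      then show ?thesis using t 3 by (intro exI[of _ 0]) (simp add: top_inorder_if_root_notin)
    next
      case False
      then have "r \<noteq> Leaf" "right_spine (top_inorder S r) \<noteq> Leaf"
        by (cases r; auto simp: root_notin_def intro!: right_spine_append_Inr_not_Leaf alternating_top_inorder)+
      moreover have "top_size S t + off_spine_size S t = top_size S r + off_spine_size S r + 1"
        using 3 by (cases l) (auto simp: root_notin_def)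
      moreover obtain j where "j \<le> 2 * (top_size S r + off_spine_size S r)"
        "((r, []), (right_spine (top_inorder S r), [])) \<in> bst_step ^^ j"
        using less[of r] calculation by auto
      ultimately show ?thesis
        using descend_right_and_return t 3 by (intro exI[of _ "j + 2"]) auto
    qed
  qed
qed

lemma bst_steps_if_top_inorder_eq:
  assumes "bst U" "bst V" "top_inorder S U = top_inorder S V" "finite S"
  shows "\<exists>j\<le>16 * card S. ((U, []), (V, [])) \<in> bst_step ^^ j"
proof -
  have size: "top_size S t + off_spine_size S t \<le> 2 * card S" if "bst t" for t
    using top_size_le_card[OF that, of S] off_spine_size_le_top_size[of S t]
      card_mono[OF assms(4) Int_lower1, of "set_tree t"] by linarith
  obtain j1 where j1: "j1 \<le> 2 * (top_size S U + off_spine_size S U)"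
    "((U, []), (right_spine (top_inorder S U), [])) \<in> bst_step ^^ j1"
    using rotate_into_right_spine by blast
  obtain j2 where j2: "j2 \<le> 2 * (top_size S V + off_spine_size S V)"
    "((V, []), (right_spine (top_inorder S V), [])) \<in> bst_step ^^ j2"
    using rotate_into_right_spine by blast
  obtain i where i: "i \<le> 3 * j2" "((right_spine (top_inorder S V), []), (V, [])) \<in> bst_step ^^ i"
    using bst_steps_reverse[OF j2(2)] by blast
  have "j1 + i \<le> 16 * card S"
    using j1(1) j2(1) i(1) size[OF assms(1)] size[OF assms(2)] by (simp add: distrib_left)
  moreover have "((U, []), (V, [])) \<in> bst_step ^^ (j1 + i)"
    using relpow_trans[OF j1(2)] i(2) assms(3) by simp
  ultimately show ?thesis by blast
qed

section \<open>Prefixes and grafting\<close>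

fun tree_prefix :: "'a tree \<Rightarrow> 'a tree \<Rightarrow> bool" where
  "tree_prefix Leaf u = True"
| "tree_prefix (Node l x r) Leaf = False"
| "tree_prefix (Node l x r) (Node l' y r') = (x = y \<and> tree_prefix l l' \<and> tree_prefix r r')"

lemma tree_prefix_refl: "tree_prefix t t"
  by (induction t) auto

lemma tree_prefix_trans: "tree_prefix a b \<Longrightarrow> tree_prefix b c \<Longrightarrow> tree_prefix a c"
proof (induction a b arbitrary: c rule: tree_prefix.induct)
  case (3 l x r l' y r')
  then show ?case by (cases c) auto
qed auto

lemma set_tree_mono_prefix: "tree_prefix a b \<Longrightarrow> set_tree a \<subseteq> set_tree b"
  by (induction a b rule: tree_prefix.induct) auto

fun item_prefix :: "'a item \<Rightarrow> 'a item \<Rightarrow> bool" where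
  "item_prefix (Inl h) (Inl h') = tree_prefix h h'"
| "item_prefix (Inr x) (Inr y) = (x = y)"
| "item_prefix _ _ = False"

lemma top_inorder_tree_prefix:
  "tree_prefix T U \<Longrightarrow> bst U \<Longrightarrow> S \<inter> set_tree U \<subseteq> set_tree T
   \<Longrightarrow> list_all2 item_prefix (top_inorder S T) (top_inorder S U)"
proof (induction T U rule: tree_prefix.induct)
  case (1 u)
  then show ?case by (cases u) auto
next
  case (3 l x r l' y r')
  then have x: "x = y" "\<forall>z\<in>set_tree l'. z < x" "\<forall>z\<in>set_tree r'. x < z" by auto
  have sub: "set_tree l \<subseteq> set_tree l'" "set_tree r \<subseteq> set_tree r'"
    using 3 set_tree_mono_prefix by auto
  have in_T: "z \<in> set_tree l \<or> z = x \<or> z \<in> set_tree r" if "z \<in> S \<inter> (set_tree l' \<union> set_tree r')" for z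
    using that 3(5) x(1) by auto
  have "S \<inter> set_tree l' \<subseteq> set_tree l"
    using in_T x sub by fastforce
  moreover have "S \<inter> set_tree r' \<subseteq> set_tree r"
    using in_T x sub by fastforce
  ultimately show ?case using 3 by (auto intro!: list_all2_appendI)
qed auto

inductive graftable :: "'a set \<Rightarrow> 'a tree \<Rightarrow> 'a item list \<Rightarrow> bool" for S where
  Leaf: "alternating L \<Longrightarrow> \<forall>h. Inl h \<in> set L \<longrightarrow> root_notin S h \<Longrightarrow> \<forall>y. Inr y \<in> set L \<longrightarrow> y \<in> S
    \<Longrightarrow> graftable S Leaf L"
| top: "x \<in> S \<Longrightarrow> graftable S l L1 \<Longrightarrow> graftable S r L2 \<Longrightarrow> Inr x \<notin> set L1
    \<Longrightarrow> graftable S (Node l x r) (L1 @ Inr x # L2)"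
| hanging: "x \<notin> S \<Longrightarrow> tree_prefix (Node l x r) h \<Longrightarrow> graftable S (Node l x r) [Inl h]"

fun graft :: "'a set \<Rightarrow> 'a tree \<Rightarrow> 'a item list \<Rightarrow> 'a tree" where
  "graft S Leaf L = right_spine L"
| "graft S (Node l x r) L = (if x \<in> S then
      Node (graft S l (takeWhile (\<lambda>i. i \<noteq> Inr x) L)) x (graft S r (tl (dropWhile (\<lambda>i. i \<noteq> Inr x) L)))
    else (case L of [Inl h] \<Rightarrow> h | _ \<Rightarrow> Leaf))"

lemma graft_top:
  assumes "x \<in> S" and "Inr x \<notin> set L1"
  shows "graft S (Node l x r) (L1 @ Inr x # L2) = Node (graft S l L1) x (graft S r L2)"
proof -
  have "\<forall>y\<in>set L1. y \<noteq> Inr x" using assms(2) by blast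
  then show ?thesis using assms(1) by simp
qed

lemma top_inorder_graft: "graftable S P L \<Longrightarrow> top_inorder S (graft S P L) = L"
proof (induction rule: graftable.induct)
  case (hanging x l r h)
  then obtain l' r' where "h = Node l' x r'" by (cases h) auto
  with hanging show ?case by simp
qed (simp_all add: graft_top top_inorder_right_spine del: graft.simps(2))

lemma tree_prefix_graft: "graftable S P L \<Longrightarrow> tree_prefix P (graft S P L)"
proof (induction rule: graftable.induct)
  case (hanging x l r h)
  then show ?case by simp
qed (simp_all add: graft_top del: graft.simps(2))

lemma list_all2_item_prefix_Inr: "list_all2 item_prefix L L' \<Longrightarrow> Inr y \<in> set L' \<Longrightarrow> Inr y \<in> set L"
proof (induction L L' rule: list_all2_induct)
  case (Cons a b L L')
  then show ?case by (cases a; cases b) auto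
qed simp

lemma alternating_list_all2_item_prefix: "alternating L \<Longrightarrow> list_all2 item_prefix L L' \<Longrightarrow> alternating L'"
  by (induction L arbitrary: L' rule: alternating.induct)
    (auto simp: list_all2_Cons1 elim!: item_prefix.elims)

lemma graftable_list_all2_item_prefix:
  "graftable S P L \<Longrightarrow> list_all2 item_prefix L L' \<Longrightarrow> \<forall>h. Inl h \<in> set L' \<longrightarrow> root_notin S h
   \<Longrightarrow> graftable S P L'"
proof (induction arbitrary: L' rule: graftable.induct)
  case (Leaf L)
  show ?case
  proof (rule graftable.Leaf)
    show "alternating L'" using Leaf alternating_list_all2_item_prefix by blast
    show "\<forall>y. Inr y \<in> set L' \<longrightarrow> y \<in> S"
      using Leaf.hyps(3) list_all2_item_prefix_Inr[OF Leaf.prems(1)] by blast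
  qed (use Leaf.prems(2) in blast)
next
  case (top x l L1 r L2)
  then obtain L1' L2' where L': "L' = L1' @ Inr x # L2'"
    and "list_all2 item_prefix L1 L1'" "list_all2 item_prefix L2 L2'"
    by (auto simp: list_all2_append1 list_all2_Cons1 elim!: item_prefix.elims)
  moreover have "Inr x \<notin> set L1'"
    using list_all2_item_prefix_Inr[OF \<open>list_all2 item_prefix L1 L1'\<close>] top.hyps(4) by blast
  ultimately show ?case
    using top.IH top.prems(2) graftable.top[OF top.hyps(1)] by simp
next
  case (hanging x l r h)
  then obtain h' where "L' = [Inl h']" "tree_prefix h h'"
    by (auto simp: list_all2_Cons1 elim!: item_prefix.elims)
  with hanging show ?case by (blast intro: graftable.hanging tree_prefix_trans)
qed

lemma self_in_subtrees: "t \<in> subtrees t"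
  by (cases t) auto

lemma set_tree_subset_if_subtrees: "s \<in> subtrees t \<Longrightarrow> set_tree s \<subseteq> set_tree t"
  by (induction t) auto

lemma subtrees_trans: "s \<in> subtrees t \<Longrightarrow> u \<in> subtrees s \<Longrightarrow> u \<in> subtrees t"
  by (induction t) auto

lemma bst_subtrees: "s \<in> subtrees t \<Longrightarrow> bst t \<Longrightarrow> bst s"
  by (induction t) auto

lemma size_subtrees_less: "s \<in> subtrees t \<Longrightarrow> s \<noteq> t \<Longrightarrow> size s < size t"
  by (induction t) (auto dest: size_subtrees)

lemma subtrees_if_root_in_set_tree:
  "bst t \<Longrightarrow> s \<in> subtrees t \<Longrightarrow> Node l x r \<in> subtrees t \<Longrightarrow> x \<in> set_tree s \<Longrightarrow> Node l x r \<in> subtrees s"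
proof (induction t arbitrary: s)
  case (Node tl y tr)
  consider "s = Node tl y tr" | "s \<in> subtrees tl" | "s \<in> subtrees tr"
    using Node.prems(2) by auto
  then show ?case
  proof cases
    case 2
    then have "x \<in> set_tree tl" using Node.prems(4) set_tree_subset_if_subtrees by blast
    then have "x < y" using Node.prems(1) by simp
    then have "x \<notin> set_tree tr" "x \<noteq> y" using Node.prems(1) by (auto dest: less_asym)
    then have "Node l x r \<in> subtrees tl" using Node.prems(3) by auto
    then show ?thesis using Node 2 by simp
  next
    case 3
    then have "x \<in> set_tree tr" using Node.prems(4) set_tree_subset_if_subtrees by blast
    then have "y < x" using Node.prems(1) by simp
    then have "x \<notin> set_tree tl" "x \<noteq> y" using Node.prems(1) by (auto dest: less_asym)
    then have "Node l x r \<in> subtrees tr" using Node.prems(3) by auto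
    then show ?thesis using Node 3 by simp
  qed (use Node.prems in simp)
qed simp

lemma top_tree_subset: "top_tree t S \<Longrightarrow> S \<subseteq> set_tree t"
  by (cases t) auto

lemma hanging_subtrees: "h \<in> hanging S t \<Longrightarrow> h \<in> subtrees t"
  by (induction t) (auto split: if_splits)

lemma hanging_root_notin: "h \<in> hanging S t \<Longrightarrow> \<exists>l x r. h = Node l x r \<and> x \<notin> S"
  by (induction t) (auto split: if_splits)

lemma set_tree_subset_hanging: "set_tree t \<subseteq> S \<union> \<Union>(set_tree ` hanging S t)"
  by (induction t) auto

lemma hanging_disjoint: "top_tree t (S \<inter> set_tree t) \<Longrightarrow> h \<in> hanging S t \<Longrightarrow> set_tree h \<inter> S = {}"
proof (induction t)
  case (Node l y r)
  have "S \<inter> set_tree (Node l y r) \<inter> set_tree l = S \<inter> set_tree l"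
    and "S \<inter> set_tree (Node l y r) \<inter> set_tree r = S \<inter> set_tree r" by auto
  then have "S \<inter> set_tree l = {} \<or> top_tree l (S \<inter> set_tree l)"
    and "S \<inter> set_tree r = {} \<or> top_tree r (S \<inter> set_tree r)"
    using Node.prems(1) unfolding top_tree.simps by metis+
  moreover have "h \<in> hanging S l \<or> h \<in> hanging S r" using Node.prems by simp
  ultimately show ?case
    using Node.IH hanging_subtrees set_tree_subset_if_subtrees by blast
qed simp

lemma hanging_proper_subtree_meets:
  "h \<in> hanging S t \<Longrightarrow> s \<in> subtrees t \<Longrightarrow> h \<in> subtrees s \<Longrightarrow> h \<noteq> s \<Longrightarrow> bst t
   \<Longrightarrow> set_tree s \<inter> S \<noteq> {}"
proof (induction t arbitrary: s)
  case (Node l y r)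
  show ?case
  proof (cases "y \<in> S \<and> s \<noteq> Node l y r")
    case True
    obtain hl hx hr where h: "h = Node hl hx hr" using hanging_root_notin[OF Node.prems(1)] by blast
    have "hx \<in> set_tree s" using Node.prems(3) unfolding h by (rule in_set_tree_if)
    consider "s \<in> subtrees l" | "s \<in> subtrees r" using True Node.prems(2) by auto
    then show ?thesis
    proof cases
      case 1
      then have "hx \<in> set_tree l" using \<open>hx \<in> set_tree s\<close> set_tree_subset_if_subtrees by blast
      then have "h \<in> hanging S l"
        using True Node.prems(1,5) h hanging_subtrees in_set_tree_if by fastforce
      then show ?thesis using Node 1 by simp
    next
      case 2
      then have "hx \<in> set_tree r" using \<open>hx \<in> set_tree s\<close> set_tree_subset_if_subtrees by blast
      then have "h \<in> hanging S r"
        using True Node.prems(1,5) h hanging_subtrees in_set_tree_if by fastforce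
      then show ?thesis using Node 2 by simp
    qed
  next
    case False
    then show ?thesis
      using Node.prems size_subtrees_less size_subtrees by (fastforce split: if_splits)
  qed
qed simp

section \<open>Block boundaries\<close>

definition order_convex :: "'a::order set \<Rightarrow> bool" where
  "order_convex I \<longleftrightarrow> (\<forall>a\<in>I. \<forall>c\<in>I. {a<..<c} \<subseteq> I)"

lemma order_convex_UNIV: "order_convex UNIV"
  by (simp add: order_convex_def)

lemma order_convex_Int: "order_convex I \<Longrightarrow> order_convex J \<Longrightarrow> order_convex (I \<inter> J)"
  by (auto simp: order_convex_def)

lemma order_convex_lessThan: "order_convex {..<x}"
  by (auto simp: order_convex_def)

lemma order_convex_greaterThan: "order_convex {x<..}"
  by (auto simp: order_convex_def)

lemma block_last_if_gap:
  "p \<in> A \<Longrightarrow> b \<in> B \<Longrightarrow> p < b \<Longrightarrow> A \<inter> {p<..<b} = {} \<Longrightarrow> A \<inter> B = {} \<Longrightarrow> block_last A B p"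
  unfolding block_last_def by (metis disjoint_iff greaterThanLessThan_iff linorder_neqE)

lemma block_first_if_gap:
  "p \<in> A \<Longrightarrow> b \<in> B \<Longrightarrow> b < p \<Longrightarrow> A \<inter> {b<..<p} = {} \<Longrightarrow> A \<inter> B = {} \<Longrightarrow> block_first A B p"
  unfolding block_first_def by (metis disjoint_iff greaterThanLessThan_iff linorder_neqE)

text \<open>The key of A in I nearest to a given key of B in I ends or starts a block.\<close>
lemma block_boundary_in_convex:
  assumes "finite A" "A \<inter> B = {}" "order_convex I" "A \<inter> I \<noteq> {}" "b \<in> B \<inter> I"
  shows "\<exists>p\<in>A \<inter> I. p \<in> block_boundaries A B"
proof (cases "\<exists>a\<in>A \<inter> I. a < b")
  case True
  define p where "p = Max {a\<in>A \<inter> I. a < b}"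
  have fin: "finite {a\<in>A \<inter> I. a < b}" using assms(1) by simp
  have p: "p \<in> A \<inter> I" "p < b" using Max_in[OF fin] True unfolding p_def by auto
  have p_max: "a \<le> p" if "a \<in> A \<inter> I" "a < b" for a
    using Max_ge[OF fin] that unfolding p_def by simp
  have "A \<inter> {p<..<b} = {}"
  proof (intro equals0I)
    fix a assume a: "a \<in> A \<inter> {p<..<b}"
    then have "a \<in> I" using p assms(3,5) unfolding order_convex_def by blast
    then show False using a p_max[of a] by auto
  qed
  then have "block_last A B p" using block_last_if_gap p assms(2,5) by blast
  then show ?thesis using p(1) unfolding block_boundaries_def by blast
next
  case False
  define p where "p = Min (A \<inter> I)"
  have p: "p \<in> A \<inter> I" unfolding p_def by (rule Min_in) (use assms(1,4) in auto)
  have p_min: "p \<le> a" if "a \<in> A \<inter> I" for a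
    unfolding p_def by (rule Min_le) (use assms(1) that in auto)
  have "b < p" using p False assms(2,5) by (metis IntD1 disjoint_iff linorder_neqE)
  have "A \<inter> {b<..<p} = {}"
  proof (intro equals0I)
    fix a assume a: "a \<in> A \<inter> {b<..<p}"
    then have "a \<in> I" using p assms(3,5) unfolding order_convex_def by blast
    then show False using a p_min[of a] by auto
  qed
  then have "block_first A B p" using block_first_if_gap p \<open>b < p\<close> assms(2,5) by blast
  then show ?thesis using p unfolding block_boundaries_def by blast
qed

lemma block_boundaries_commute: "block_boundaries A B = block_boundaries B A"
  unfolding block_boundaries_def block_first_def block_last_def by blast

section \<open>Reshaping a merged tree into a prefix extension of an input tree\<close>

lemma set_tree_Int_lessThan_root: "bst (Node l x r) \<Longrightarrow> set_tree (Node l x r) \<inter> {..<x} = set_tree l"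
  by (auto dest: less_asym)

lemma set_tree_Int_greaterThan_root: "bst (Node l x r) \<Longrightarrow> set_tree (Node l x r) \<inter> {x<..} = set_tree r"
  by (auto dest: less_asym)

definition items_within :: "'a::linorder item list \<Rightarrow> 'a set \<Rightarrow> 'a item list \<Rightarrow> bool" where
  "items_within M I L \<longleftrightarrow> alternating L \<and> sorted_wrt item_less L \<and> set L \<subseteq> set M
     \<and> (\<forall>it\<in>set L. item_keys it \<subseteq> I)
     \<and> (\<forall>it\<in>set M. item_keys it \<noteq> {} \<and> item_keys it \<subseteq> I \<longrightarrow> it \<in> set L)"

lemma items_within_top_inorder: "bst t \<Longrightarrow> items_within (top_inorder S t) UNIV (top_inorder S t)"
  by (simp add: items_within_def alternating_top_inorder sorted_top_inorder)

lemma items_within_split: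
  assumes "items_within M I (L1 @ Inr x # L2)"
  shows "items_within M (I \<inter> {..<x}) L1" and "items_within M (I \<inter> {x<..}) L2"
proof -
  have L: "alternating L1" "alternating L2" "sorted_wrt item_less L1" "sorted_wrt item_less L2"
    "set L1 \<subseteq> set M" "set L2 \<subseteq> set M"
    and keys: "\<forall>it\<in>set (L1 @ Inr x # L2). item_keys it \<subseteq> I"
    and complete: "\<forall>it\<in>set M. item_keys it \<noteq> {} \<and> item_keys it \<subseteq> I \<longrightarrow> it \<in> set (L1 @ Inr x # L2)"
    using assms alternating_append_InrD[of L1 x L2] unfolding items_within_def
    by (auto simp: sorted_wrt_append)
  have below: "\<forall>it\<in>set L1. item_keys it \<subseteq> {..<x}" and above: "\<forall>it\<in>set L2. item_keys it \<subseteq> {x<..}"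
    using assms unfolding items_within_def by (auto simp: sorted_wrt_append item_less_def)
  have empty: "item_keys it = {}" if "item_keys it \<subseteq> {..<x}" "item_keys it \<subseteq> {x<..}" for it
    using that by (auto dest: less_asym)
  have complete1: "it \<in> set L1" if "item_keys it \<noteq> {}" "item_keys it \<subseteq> I \<inter> {..<x}" "it \<in> set M" for it
    using that complete above empty[of it] by auto
  have complete2: "it \<in> set L2" if "item_keys it \<noteq> {}" "item_keys it \<subseteq> I \<inter> {x<..}" "it \<in> set M" for it
    using that complete below empty[of it] by auto
  have "\<forall>it\<in>set L1. item_keys it \<subseteq> I \<inter> {..<x}" "\<forall>it\<in>set L2. item_keys it \<subseteq> I \<inter> {x<..}"
    using keys below above by auto
  then show "items_within M (I \<inter> {..<x}) L1" and "items_within M (I \<inter> {x<..}) L2"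
    using L complete1 complete2 unfolding items_within_def by blast+
qed

locale bst_merge_top =
  fixes TA TB T :: "'a::linorder tree" and \<tau> :: "'a set"
  assumes bst_TA: "bst TA" and bst_TB: "bst TB" and bst_T: "bst T"
    and disjoint: "set_tree TA \<inter> set_tree TB = {}"
    and set_T: "set_tree T = set_tree TA \<union> set_tree TB"
    and top_TA: "top_tree TA (\<tau> \<inter> set_tree TA)"
    and top_TB: "top_tree TB (\<tau> \<inter> set_tree TB)"
    and top_T: "top_tree T \<tau>"
    and hanging_T: "\<forall>s\<in>hanging \<tau> T. s \<in> subtrees TA \<or> s \<in> subtrees TB"
    and boundaries: "block_boundaries (set_tree TA) (set_tree TB) \<subseteq> \<tau>"

lemma bst_merge_top_if_bst_merge:
  assumes "bst_merge TA TB T m"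
  shows "\<exists>\<tau>. bst_merge_top TA TB T \<tau> \<and> m = card \<tau>"
proof -
  obtain \<tau>a \<tau>b where merge: "bst TA" "bst TB" "set_tree TA \<inter> set_tree TB = {}"
    "top_tree TA \<tau>a" "top_tree TB \<tau>b" "bst T" "set_tree T = set_tree TA \<union> set_tree TB"
    "top_tree T (\<tau>a \<union> \<tau>b)" "\<forall>s \<in> hanging (\<tau>a \<union> \<tau>b) T. s \<in> subtrees TA \<or> s \<in> subtrees TB"
    "block_boundaries (set_tree TA) (set_tree TB) \<subseteq> \<tau>a \<union> \<tau>b" "m = card (\<tau>a \<union> \<tau>b)"
    using assms unfolding bst_merge_def by blast
  then have "(\<tau>a \<union> \<tau>b) \<inter> set_tree TA = \<tau>a" "(\<tau>a \<union> \<tau>b) \<inter> set_tree TB = \<tau>b"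
    using top_tree_subset by blast+
  with merge show ?thesis
    by (intro exI[of _ "\<tau>a \<union> \<tau>b"]) (simp add: bst_merge_top_def)
qed

context bst_merge_top
begin

lemma swap: "bst_merge_top TB TA T \<tau>"
  using bst_merge_top_axioms block_boundaries_commute[of "set_tree TA" "set_tree TB"]
  unfolding bst_merge_top_def by (auto simp: Un_commute)

lemma top_subset: "\<tau> \<subseteq> set_tree TA \<union> set_tree TB"
  using top_tree_subset[OF top_T] set_T by simp

lemma hanging_T_if_hanging_TA:
  assumes "h \<in> hanging \<tau> TA"
  shows "h \<in> hanging \<tau> T"
proof -
  obtain l x r where h: "h = Node l x r" "x \<notin> \<tau>" using hanging_root_notin[OF assms] by blast
  have h_TA: "h \<in> subtrees TA" using hanging_subtrees[OF assms] .
  then have x: "x \<in> set_tree TA" unfolding h(1) by (rule in_set_tree_if)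
  then obtain s where s: "s \<in> hanging \<tau> T" "x \<in> set_tree s"
    using set_tree_subset_hanging[of T \<tau>] h(2) set_T by blast
  have "top_tree T (\<tau> \<inter> set_tree T)" using top_T top_tree_subset[OF top_T] by (simp add: Int_absorb2)
  then have s_top: "set_tree s \<inter> \<tau> = {}" using hanging_disjoint s(1) by blast
  have "s \<notin> subtrees TB" using s(2) x disjoint set_tree_subset_if_subtrees by blast
  then have "s \<in> subtrees TA" using s(1) hanging_T by blast
  then have "h \<in> subtrees s" using subtrees_if_root_in_set_tree[OF bst_TA] h_TA h s(2) by blast
  then have "h = s"
    using hanging_proper_subtree_meets[OF assms \<open>s \<in> subtrees TA\<close> _ _ bst_TA] s_top by blast
  then show ?thesis using s(1) by simp
qed

text \<open>This is where the block boundaries enter: a subtree of TA hanging off \<tau> spans no key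
  of TB, because the key of TA nearest to such a key would be a block boundary outside \<tau>.\<close>
lemma no_Inr_in_items_within_hanging:
  assumes "h \<in> hanging \<tau> TA" "order_convex I" "set_tree TA \<inter> I = set_tree h"
    and "items_within (top_inorder \<tau> T) I L"
  shows "Inr y \<notin> set L"
proof
  assume "Inr y \<in> set L"
  then have y: "y \<in> \<tau>" "y \<in> I"
    using assms(4) top_inorder_Inr unfolding items_within_def by fastforce+
  have h_top: "set_tree h \<inter> \<tau> = {}" using hanging_disjoint[OF top_TA assms(1)] .
  show False
  proof (cases "y \<in> set_tree TA")
    case True
    then show False using y assms(3) h_top by blast
  next
    case False
    then have "y \<in> set_tree TB \<inter> I" using y top_subset by blast
    moreover have "set_tree TA \<inter> I \<noteq> {}"
      using assms(3) hanging_root_notin[OF assms(1)] by auto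
    ultimately obtain p where "p \<in> set_tree TA \<inter> I" "p \<in> block_boundaries (set_tree TA) (set_tree TB)"
      using block_boundary_in_convex[OF finite_set_tree disjoint assms(2)] by blast
    then show False using assms(3) h_top boundaries by blast
  qed
qed

lemma graftable_subtree:
  assumes "P \<in> subtrees TA" "hanging \<tau> P \<subseteq> hanging \<tau> TA" "order_convex I"
    and "set_tree TA \<inter> I = set_tree P" "items_within (top_inorder \<tau> T) I L"
  shows "graftable \<tau> P L"
  using assms
proof (induction P arbitrary: I L)
  case Leaf
  then have L: "alternating L" "set L \<subseteq> set (top_inorder \<tau> T)" by (simp_all add: items_within_def)
  show ?case
  proof (rule graftable.Leaf[OF L(1)])
    show "\<forall>h. Inl h \<in> set L \<longrightarrow> root_notin \<tau> h" using L(2) top_inorder_Inl_root_notin by (metis subsetD)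
    show "\<forall>y. Inr y \<in> set L \<longrightarrow> y \<in> \<tau>" using L(2) top_inorder_Inr by (metis subsetD)
  qed
next
  case (Node l x r)
  have bst: "bst (Node l x r)" using bst_subtrees[OF Node.prems(1) bst_TA] .
  show ?case
  proof (cases "x \<in> \<tau>")
    case True
    have "Inr x \<in> set (top_inorder \<tau> T)" using Inr_in_top_inorder[OF top_T order_refl True] .
    moreover have "x \<in> set_tree TA \<inter> I" unfolding Node.prems(4) by simp
    then have "x \<in> I" by blast
    ultimately have "Inr x \<in> set L" using Node.prems(5) unfolding items_within_def by auto
    then obtain L1 L2 where L: "L = L1 @ Inr x # L2" "Inr x \<notin> set L1"
      by (meson split_list_first)
    have "l \<in> subtrees TA" "r \<in> subtrees TA"
      using subtrees_trans[OF Node.prems(1)] self_in_subtrees by auto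
    moreover have "hanging \<tau> l \<subseteq> hanging \<tau> TA" "hanging \<tau> r \<subseteq> hanging \<tau> TA"
      using Node.prems(2) True by auto
    moreover have "order_convex (I \<inter> {..<x})" "order_convex (I \<inter> {x<..})"
      using Node.prems(3) order_convex_Int order_convex_lessThan order_convex_greaterThan by blast+
    moreover have "set_tree TA \<inter> (I \<inter> {..<x}) = set_tree l" "set_tree TA \<inter> (I \<inter> {x<..}) = set_tree r"
      using Node.prems(4) set_tree_Int_lessThan_root[OF bst] set_tree_Int_greaterThan_root[OF bst]
      by (simp_all add: Int_assoc[symmetric])
    moreover have "items_within (top_inorder \<tau> T) (I \<inter> {..<x}) L1"
      "items_within (top_inorder \<tau> T) (I \<inter> {x<..}) L2"
      using items_within_split Node.prems(5) L(1) by blast+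
    ultimately show ?thesis
      using Node.IH graftable.top[OF True _ _ L(2)] L(1) by blast
  next
    case False
    then have h: "Node l x r \<in> hanging \<tau> TA" using Node.prems(2) by simp
    then have "Inl (Node l x r) \<in> set (top_inorder \<tau> T)"
      using hanging_T_if_hanging_TA Inl_hanging_in_top_inorder by blast
    moreover have "set_tree (Node l x r) \<subseteq> I" using Node.prems(4) by (metis Int_lower2)
    ultimately have "Inl (Node l x r) \<in> set L" using Node.prems(5) unfolding items_within_def by fastforce
    moreover obtain h' where "L = [Inl h']"
      using alternating_without_Inr no_Inr_in_items_within_hanging[OF h Node.prems(3-5)] Node.prems(5)
      unfolding items_within_def by blast
    ultimately have "L = [Inl (Node l x r)]" by simp
    then show ?thesis using graftable.hanging[OF False tree_prefix_refl] by simp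
  qed
qed

lemma graftable_top_inorder: "graftable \<tau> TA (top_inorder \<tau> T)"
  using graftable_subtree[OF self_in_subtrees order_refl order_convex_UNIV]
    items_within_top_inorder[OF bst_T] by simp

lemma extension_with_prefix_TA:
  assumes "bst U" "tree_prefix T U"
  shows "\<exists>V. bst V \<and> tree_prefix TA V \<and> top_inorder \<tau> V = top_inorder \<tau> U"
proof -
  have "list_all2 item_prefix (top_inorder \<tau> T) (top_inorder \<tau> U)"
    using top_inorder_tree_prefix[OF assms(2,1)] top_tree_subset[OF top_T] by blast
  then have "graftable \<tau> TA (top_inorder \<tau> U)"
    using graftable_list_all2_item_prefix[OF graftable_top_inorder] top_inorder_Inl_root_notin by blast
  then have V: "top_inorder \<tau> (graft \<tau> TA (top_inorder \<tau> U)) = top_inorder \<tau> U"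
    "tree_prefix TA (graft \<tau> TA (top_inorder \<tau> U))"
    using top_inorder_graft tree_prefix_graft by blast+
  moreover have "bst (graft \<tau> TA (top_inorder \<tau> U))"
    using bst_if_sorted_top_inorder[of \<tau>] V(1) sorted_top_inorder[OF assms(1)]
      top_inorder_Inl_bst[OF _ assms(1)] by simp
  ultimately show ?thesis by blast
qed

end

section \<open>Serving the input of a mergesort run\<close>

lemma search_prepend_steps:
  "((t, []), (t', [])) \<in> bst_step ^^ j \<Longrightarrow> search t' k t'' m \<Longrightarrow> search t k t'' (j + m)"
  unfolding search_def by (metis (no_types, lifting) add.assoc relpow_trans)

lemma serve_prepend_steps:
  "((t, []), (t', [])) \<in> bst_step ^^ j \<Longrightarrow> serve t' (k # ks) m \<Longrightarrow> serve t (k # ks) (j + m)"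
  using search_prepend_steps by fastforce

lemma search_root: "search (Node l x r) x (Node l x r) 0"
  unfolding search_def by (intro exI[of _ "(Node l x r, [])"] exI[of _ "[]"] exI[of _ 0]) (simp add: value_at_def)

definition serve_within :: "'a tree \<Rightarrow> 'a list \<Rightarrow> nat \<Rightarrow> bool" where
  "serve_within t ks m \<longleftrightarrow> (\<exists>m0\<le>m. serve t ks m0)"

lemma serve_within_mono: "serve_within t ks m \<Longrightarrow> m \<le> m' \<Longrightarrow> serve_within t ks m'"
  unfolding serve_within_def by (meson le_trans)

lemma serve_within_prepend_steps:
  assumes "((t, []), (t', [])) \<in> bst_step ^^ j" and "serve_within t' ks m"
  shows "serve_within t ks (j + m)"
proof (cases ks)
  case Nil
  then show ?thesis unfolding serve_within_def by simp
next
  case Cons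
  obtain m0 where "m0 \<le> m" "serve t' ks m0" using assms(2) unfolding serve_within_def by blast
  then have "serve t ks (j + m0)" using serve_prepend_steps[OF assms(1)] Cons by simp
  then show ?thesis using \<open>m0 \<le> m\<close> unfolding serve_within_def by (intro exI[of _ "j + m0"]) simp
qed

lemma serve_within_root: "serve_within (Node l x r) ks m \<Longrightarrow> serve_within (Node l x r) (x # ks) m"
  unfolding serve_within_def using search_root by fastforce

lemma msort_bst: "msort xs T a \<Longrightarrow> bst T \<and> set_tree T = set xs"
  by (induction rule: msort.induct) (auto simp: bst_merge_def)

theorem msort_serve_within:
  "msort xs T a \<Longrightarrow> bst U \<Longrightarrow> tree_prefix T U \<Longrightarrow> serve_within U ks m
   \<Longrightarrow> serve_within U (xs @ ks) (48 * a + m)"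
proof (induction arbitrary: U ks m rule: msort.induct)
  case (single x)
  then obtain l r where "U = Node l x r" by (cases U) auto
  then show ?case using single serve_within_root by simp
next
  case (merge xs ys TA a TB b T k)
  obtain \<tau> where merge_top: "bst_merge_top TA TB T \<tau>" and k: "k = card \<tau>"
    using bst_merge_top_if_bst_merge[OF merge.hyps(5)] by blast
  interpret bst_merge_top TA TB T \<tau> by (rule merge_top)
  interpret swapped: bst_merge_top TB TA T \<tau> using swap .
  obtain VA where VA: "bst VA" "tree_prefix TA VA" "top_inorder \<tau> VA = top_inorder \<tau> U"
    using extension_with_prefix_TA[OF merge.prems(1,2)] by blast
  obtain VB where VB: "bst VB" "tree_prefix TB VB" "top_inorder \<tau> VB = top_inorder \<tau> U"
    using swapped.extension_with_prefix_TA[OF merge.prems(1,2)] by blast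
  have "finite \<tau>" using finite_subset[OF top_subset] by simp
  then obtain d1 d2 d3 where d: "d1 \<le> 16 * k" "((U, []), (VA, [])) \<in> bst_step ^^ d1"
    "d2 \<le> 16 * k" "((VA, []), (VB, [])) \<in> bst_step ^^ d2"
    "d3 \<le> 16 * k" "((VB, []), (U, [])) \<in> bst_step ^^ d3"
    using bst_steps_if_top_inorder_eq merge.prems(1) VA VB k by metis
  have "serve_within VB (ys @ ks) (48 * b + (d3 + m))"
    using merge.IH(2)[OF VB(1,2) serve_within_prepend_steps[OF d(6) merge.prems(3)]] .
  then have "serve_within VA (xs @ ys @ ks) (48 * a + (d2 + (48 * b + (d3 + m))))"
    using merge.IH(1)[OF VA(1,2) serve_within_prepend_steps[OF d(4)]] by simp
  then have "serve_within U (xs @ ys @ ks) (d1 + (48 * a + (d2 + (48 * b + (d3 + m)))))"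
    using serve_within_prepend_steps[OF d(2)] by blast
  moreover have "d1 + (48 * a + (d2 + (48 * b + (d3 + m)))) \<le> 48 * (a + b + k) + m"
    using d(1,3,5) by simp
  ultimately show ?case by (simp add: serve_within_mono)
qed

theorem theorem4:
  shows "\<exists>c::nat. \<forall>(n::nat) (\<pi>::nat list) T a.
           distinct \<pi> \<and> set \<pi> = {1..n} \<and> msort \<pi> T a \<longrightarrow> opt_bst \<pi> \<le> c * a + c"
proof (intro exI[of _ 48] allI impI)
  fix n :: nat and \<pi> :: "nat list" and T a
  assume "distinct \<pi> \<and> set \<pi> = {1..n} \<and> msort \<pi> T a"
  then have msort: "msort \<pi> T a" by blast
  then have T: "bst T" "set_tree T = set \<pi>" using msort_bst by auto
  have "serve_within T [] 0" unfolding serve_within_def by simp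
  then have "serve_within T \<pi> (48 * a)"
    using msort_serve_within[OF msort T(1) tree_prefix_refl, of "[]" 0] by simp
  then obtain m where "m \<le> 48 * a" "serve T \<pi> m" unfolding serve_within_def by blast
  moreover have "opt_bst \<pi> \<le> m"
    unfolding opt_bst_def by (rule Least_le) (use T calculation in blast)
  ultimately show "opt_bst \<pi> \<le> 48 * a + 48" by simp
qed

end
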